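(* For each $t\in\{0,1,\dots,T\}$ and every state $(\bm{x},k)=((x_1,\dots,x_N),k)\in\mathbb{Z}^N\times\mathbb{N}_0$, $$V^N_t(\bm{x},k)=\sum_{i=1}^N\tilde V^{N,i}_t(x_i,k).$$
   Context: Spare parts setting. Fix integers $N\ge1$, $T\ge1$, reals $\alpha_0,\beta_0>0$, and for each $i\in\mathcal{N}=\{1,\dots,N\}$ unit costs $c_v^i,c_h^i,c_b^i>0$ (transportation, holding, backorder) with $c_b^i>c_v^i$. $\mathbb{N}_0=\{0,1,2,\dots\}$, $y^+=\max(y,0)$. For real $r>0$ and $p\in(0,1)$, $NB(r,p)$ is the distribution on $\mathbb{N}_0$ with $P(n)=\frac{\Gamma(n+r)}{\Gamma(r)n!}p^r(1-p)^n$; $NB(0,p)$ is the point mass at $0$. For $t\in\{0,\dots,T\}$ let $p_t=\frac{\beta_0+Nt}{\beta_0+Nt+1}$. At epoch $t$ and statistic $k$ let $Z\sim NB(\alpha_0+k,p_t)$, $K\sim NB((N-1)(\alpha_0+k),p_t)$ independent, and set $C_i(a,x,k)=c_v^i(a-x)+c_h^i\mathbb{E}[(a-Z)^+]+c_b^i\mathbb{E}[(Z-a)^+]$ for integers $a\ge x$. Original MDP: state $(\bm{x},k)\in\mathbb{Z}^N\times\mathbb{N}_0$ ($x_i$ = net inventory of warehouse $i$, $k$ = total demand observed); actions $\bm{a}\in\mathbb{Z}^N$ with $a_i\ge x_i$; $V^N_T\equiv0$ and for $t=T-1,\dots,0$: $V^N_t(\bm{x},k)=\min_{\bm{a}}\{\sum_iC_i(a_i,x_i,k)+\mathbb{E}[V^N_{t+1}(\bm{a}-\bm{Z},k+\sum_iZ_i)]\}$,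 with $Z_1,\dots,Z_N$ i.i.d. $NB(\alpha_0+k,p_t)$. Alternative MDP: $\tilde V^{N,i}_T\equiv0$ and for $t=T-1,\dots,0$, $(x,k)\in\mathbb{Z}\times\mathbb{N}_0$: $\tilde V^{N,i}_t(x,k)=\min_{a\in\mathbb{Z},a\ge x}\{C_i(a,x,k)+\mathbb{E}[\tilde V^{N,i}_{t+1}(a-Z,k+Z+K)]\}$. *)

theory Defs
  imports "HOL-Analysis.Analysis"
begin

definition nb :: "real \<Rightarrow> real \<Rightarrow> nat \<Rightarrow> real" where
  "nb r p n = (if r = 0 then (if n = 0 then 1 else 0)
     else Gamma (real n + r) / (Gamma r * fact n) * p powr r * (1 - p) ^ n)"

definition ptime :: "nat \<Rightarrow> real \<Rightarrow> nat \<Rightarrow> real" where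
  "ptime N beta0 t = (beta0 + real N * real t) / (beta0 + real N * real t + 1)"

definition E_nb :: "real \<Rightarrow> real \<Rightarrow> (nat \<Rightarrow> ennreal) \<Rightarrow> ennreal" where
  "E_nb r p f = (\<integral>\<^sup>+ n. ennreal (nb r p n) * f n \<partial>count_space UNIV)"

definition Ccost :: "(nat \<Rightarrow> real) \<Rightarrow> (nat \<Rightarrow> real) \<Rightarrow> (nat \<Rightarrow> real) \<Rightarrow> real \<Rightarrow> real
    \<Rightarrow> nat \<Rightarrow> int \<Rightarrow> int \<Rightarrow> nat \<Rightarrow> ennreal" where
  "Ccost cv ch cb alpha0 p i a x k =
     ennreal (cv i * real_of_int (a - x))
     + ennreal (ch i) * E_nb (alpha0 + real k) p (\<lambda>z. ennreal (real_of_int (max (a - int z) 0)))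
     + ennreal (cb i) * E_nb (alpha0 + real k) p (\<lambda>z. ennreal (real_of_int (max (int z - a) 0)))"

text \<open>Original MDP, indexed by number of remaining periods n (epoch t = T - n).
  Warehouses are indexed by {1..N}; a state vector is a function nat => int of which
  only the coordinates 1..N are relevant.\<close>
primrec Worig :: "nat \<Rightarrow> nat \<Rightarrow> real \<Rightarrow> real \<Rightarrow> (nat \<Rightarrow> real) \<Rightarrow> (nat \<Rightarrow> real) \<Rightarrow> (nat \<Rightarrow> real)
    \<Rightarrow> nat \<Rightarrow> (nat \<Rightarrow> int) \<Rightarrow> nat \<Rightarrow> ennreal" where
  "Worig N T alpha0 beta0 cv ch cb 0 x k = 0"
| "Worig N T alpha0 beta0 cv ch cb (Suc n) x k =
     (let p = ptime N beta0 (T - Suc n) in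
      INF a \<in> {a :: nat \<Rightarrow> int. \<forall>i\<in>{1..N}. x i \<le> a i}.
        (\<Sum>i\<in>{1..N}. Ccost cv ch cb alpha0 p i (a i) (x i) k)
        + (\<integral>\<^sup>+ z. (\<Prod>i\<in>{1..N}. ennreal (nb (alpha0 + real k) p (z i)))
               * Worig N T alpha0 beta0 cv ch cb n (\<lambda>i. a i - int (z i)) (k + (\<Sum>i\<in>{1..N}. z i))
            \<partial>count_space (PiE {1..N} (\<lambda>_. UNIV))))"

definition Vorig :: "nat \<Rightarrow> nat \<Rightarrow> real \<Rightarrow> real \<Rightarrow> (nat \<Rightarrow> real) \<Rightarrow> (nat \<Rightarrow> real) \<Rightarrow> (nat \<Rightarrow> real)
    \<Rightarrow> nat \<Rightarrow> (nat \<Rightarrow> int) \<Rightarrow> nat \<Rightarrow> ennreal" where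
  "Vorig N T alpha0 beta0 cv ch cb t x k = Worig N T alpha0 beta0 cv ch cb (T - t) x k"

primrec Walt :: "nat \<Rightarrow> nat \<Rightarrow> real \<Rightarrow> real \<Rightarrow> (nat \<Rightarrow> real) \<Rightarrow> (nat \<Rightarrow> real) \<Rightarrow> (nat \<Rightarrow> real)
    \<Rightarrow> nat \<Rightarrow> nat \<Rightarrow> int \<Rightarrow> nat \<Rightarrow> ennreal" where
  "Walt N T alpha0 beta0 cv ch cb i 0 x k = 0"
| "Walt N T alpha0 beta0 cv ch cb i (Suc n) x k =
     (let p = ptime N beta0 (T - Suc n) in
      INF a \<in> {a :: int. x \<le> a}.
        Ccost cv ch cb alpha0 p i a x k
        + (\<integral>\<^sup>+ zw. ennreal (nb (alpha0 + real k) p (fst zw))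
                 * ennreal (nb (real (N - 1) * (alpha0 + real k)) p (snd zw))
               * Walt N T alpha0 beta0 cv ch cb i n (a - int (fst zw)) (k + fst zw + snd zw)
            \<partial>count_space UNIV))"

definition Valt :: "nat \<Rightarrow> nat \<Rightarrow> real \<Rightarrow> real \<Rightarrow> (nat \<Rightarrow> real) \<Rightarrow> (nat \<Rightarrow> real) \<Rightarrow> (nat \<Rightarrow> real)
    \<Rightarrow> nat \<Rightarrow> nat \<Rightarrow> int \<Rightarrow> nat \<Rightarrow> ennreal" where
  "Valt N T alpha0 beta0 cv ch cb i t x k = Walt N T alpha0 beta0 cv ch cb i (T - t) x k"

end

theory Submission
  imports Defs
begin

text \<open>The one-period cost is a sum of per-warehouse costs and the set of admissible
  order-up-to vectors is a product, so the Bellman minimisation splits into independent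
  one-dimensional minimisations as soon as the continuation value is a sum of per-warehouse
  terms. By induction it is, and the expectation of the \<open>i\<close>-th term depends on the demand
  vector \<open>Z\<close> only through \<open>Z i\<close> and the sum of the other components. Independent
  negative binomials with a common \<open>p\<close> add up to a negative binomial (Chu--Vandermonde for
  rising factorials), so this pair has law \<open>NB(r,p) \<otimes> NB((N-1)r,p)\<close>, which is exactly the
  transition of the alternative single-warehouse MDP.\<close>

lemma nb_eq_pochhammer:
  assumes "r \<ge> 0" "p > 0"
  shows "nb r p n = pochhammer r n / fact n * p powr r * (1 - p) ^ n"
proof (cases "r = 0")
  case True
  then show ?thesis using assms by (simp add: nb_def pochhammer_0_left)
next
  case False
  then have "r \<notin> \<int>\<^sub>\<le>\<^sub>0" using assms by (auto elim!: nonpos_Ints_cases)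
  then have "pochhammer r n = Gamma (r + of_nat n) / Gamma r" by (rule pochhammer_Gamma)
  then show ?thesis using False by (simp add: nb_def add.commute)
qed

lemma nb_nonneg:
  assumes "r \<ge> 0" "0 < p" "p < 1"
  shows "nb r p n \<ge> 0"
proof -
  have "pochhammer r n \<ge> 0"
    using assms(1) by (cases "r = 0") (auto simp: pochhammer_0_left intro!: pochhammer_nonneg)
  then show ?thesis using assms by (simp add: nb_eq_pochhammer)
qed

lemma nb_convolution:
  assumes "r \<ge> 0" "s \<ge> 0" "0 < p" "p < 1"
  shows "(\<Sum>u\<le>m. nb r p u * nb s p (m - u)) = nb (r + s) p m"
proof -
  have "(\<Sum>u\<le>m. nb r p u * nb s p (m - u)) =
     (\<Sum>u\<le>m. of_nat (m choose u) * pochhammer r u * pochhammer s (m - u))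
       / fact m * p powr (r + s) * (1 - p) ^ m"
    unfolding sum_divide_distrib sum_distrib_right
  proof (rule sum.cong[OF refl])
    fix u assume u: "u \<in> {..m}"
    then have "(1 - p) ^ u * (1 - p) ^ (m - u) = (1 - p) ^ m" by (simp add: power_add[symmetric])
    moreover have "real (m choose u) = fact m / (fact u * fact (m - u))"
      using u by (simp add: binomial_fact)
    ultimately show "nb r p u * nb s p (m - u) = of_nat (m choose u) * pochhammer r u
        * pochhammer s (m - u) / fact m * p powr (r + s) * (1 - p) ^ m"
      using assms by (simp add: nb_eq_pochhammer powr_add field_simps)
  qed
  also have "\<dots> = nb (r + s) p m"
    using assms by (simp add: nb_eq_pochhammer pochhammer_binomial_sum[symmetric])
  finally show ?thesis .
qed

lemma nn_integral_PiE_insert: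
  fixes f :: "('a \<Rightarrow> 'b) \<Rightarrow> ennreal"
  assumes "i \<notin> S"
  shows "(\<integral>\<^sup>+z. f z \<partial>count_space (PiE (insert i S) (\<lambda>_. UNIV)))
       = (\<integral>\<^sup>+u. \<integral>\<^sup>+w. f (w(i := u)) \<partial>count_space (PiE S (\<lambda>_. UNIV)) \<partial>count_space UNIV)"
proof -
  have bij: "bij_betw (\<lambda>(u, w). w(i := u)) (UNIV \<times> PiE S (\<lambda>_. UNIV)) (PiE (insert i S) (\<lambda>_. UNIV))"
    unfolding bij_betw_def PiE_insert_eq[of i S] by (intro conjI inj_combinator[OF assms] refl)
  have "(\<integral>\<^sup>+z. f z \<partial>count_space (PiE (insert i S) (\<lambda>_. UNIV)))
      = (\<integral>\<^sup>+uw. f ((snd uw)(i := fst uw)) \<partial>count_space (UNIV \<times> PiE S (\<lambda>_. UNIV)))"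
    using nn_integral_bij_count_space[OF bij, of f] by (simp add: case_prod_beta)
  also have "\<dots> = (\<integral>\<^sup>+uw. f ((snd uw)(i := fst uw)) * indicator (UNIV \<times> PiE S (\<lambda>_. UNIV)) uw \<partial>count_space UNIV)"
    by (simp add: nn_integral_count_space_indicator)
  also have "\<dots> = (\<integral>\<^sup>+u. \<integral>\<^sup>+w. f (w(i := u)) * indicator (PiE S (\<lambda>_. UNIV)) w \<partial>count_space UNIV \<partial>count_space UNIV)"
    by (subst nn_integral_fst_count_space[symmetric]) (simp add: indicator_times)
  also have "\<dots> = (\<integral>\<^sup>+u. \<integral>\<^sup>+w. f (w(i := u)) \<partial>count_space (PiE S (\<lambda>_. UNIV)) \<partial>count_space UNIV)"
    by (simp add: nn_integral_count_space_indicator)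
  finally show ?thesis .
qed

lemma nn_integral_nat_convolution:
  fixes f :: "nat \<Rightarrow> nat \<Rightarrow> ennreal"
  shows "(\<integral>\<^sup>+u. \<integral>\<^sup>+m. f u m \<partial>count_space UNIV \<partial>count_space UNIV)
       = (\<integral>\<^sup>+s. (\<Sum>u\<le>s. f u (s - u)) \<partial>count_space UNIV)"
proof -
  have shift: "(\<integral>\<^sup>+m. f u m \<partial>count_space UNIV)
      = (\<integral>\<^sup>+s. f u (s - u) * indicator {u..} s \<partial>count_space UNIV)" for u
  proof -
    have "bij_betw ((+) u) UNIV {u..}"
      by (rule bij_betw_byWitness[where f' = "\<lambda>s. s - u"]) auto
    then have "(\<integral>\<^sup>+m. f u m \<partial>count_space UNIV) = (\<integral>\<^sup>+s. f u (s - u) \<partial>count_space {u..})"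
      using nn_integral_bij_count_space[of "(+) u" UNIV "{u..}" "\<lambda>s. f u (s - u)"] by simp
    then show ?thesis by (simp add: nn_integral_count_space_indicator)
  qed
  have "(\<integral>\<^sup>+u. \<integral>\<^sup>+m. f u m \<partial>count_space UNIV \<partial>count_space UNIV)
      = (\<integral>\<^sup>+s. \<integral>\<^sup>+u. f u (s - u) * indicator {..s} u \<partial>count_space UNIV \<partial>count_space UNIV)"
    unfolding shift
    by (subst nn_integral_count_space_nn_integral) (auto intro!: nn_integral_cong split: split_indicator)
  also have "\<dots> = (\<integral>\<^sup>+s. (\<Sum>u\<le>s. f u (s - u)) \<partial>count_space UNIV)"
    by (simp add: nn_integral_count_space_indicator[symmetric] nn_integral_count_space_finite)
  finally show ?thesis .
qed

lemma nn_integral_nb_PiE_sum: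
  fixes g :: "nat \<Rightarrow> ennreal"
  assumes "finite S" "r \<ge> 0" "0 < p" "p < 1"
  shows "(\<integral>\<^sup>+w. (\<Prod>j\<in>S. ennreal (nb r p (w j))) * g (\<Sum>j\<in>S. w j) \<partial>count_space (PiE S (\<lambda>_. UNIV)))
       = (\<integral>\<^sup>+m. ennreal (nb (real (card S) * r) p m) * g m \<partial>count_space UNIV)"
  using assms(1)
proof (induction S arbitrary: g rule: finite_induct)
  case empty
  have "(\<integral>\<^sup>+m. ennreal (nb 0 p m) * g m \<partial>count_space UNIV) = g 0"
    by (subst nn_integral_count_space'[where A = "{0}"]) (auto simp: nb_def)
  then show ?case by simp
next
  case (insert j S)
  let ?nb = "\<lambda>n. ennreal (nb r p n)" and ?nb' = "\<lambda>n. ennreal (nb (real (card S) * r) p n)"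
  have "(\<integral>\<^sup>+w. (\<Prod>l\<in>insert j S. ?nb (w l)) * g (\<Sum>l\<in>insert j S. w l) \<partial>count_space (PiE (insert j S) (\<lambda>_. UNIV)))
      = (\<integral>\<^sup>+u. ?nb u * \<integral>\<^sup>+w. (\<Prod>l\<in>S. ?nb (w l)) * g (u + (\<Sum>l\<in>S. w l))
            \<partial>count_space (PiE S (\<lambda>_. UNIV)) \<partial>count_space UNIV)"
  proof -
    have upd: "(\<Sum>l\<in>S. (w(j := u)) l) = (\<Sum>l\<in>S. w l)" "(\<Prod>l\<in>S. ?nb ((w(j := u)) l)) = (\<Prod>l\<in>S. ?nb (w l))"
      for w :: "'a \<Rightarrow> nat" and u
      using insert.hyps(2) by (auto intro!: sum.cong prod.cong)
    show ?thesis
      using insert.hyps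
      by (simp add: nn_integral_PiE_insert upd mult.assoc nn_integral_cmult[symmetric] fun_upd_same del: fun_upd_apply)
  qed
  also have "\<dots> = (\<integral>\<^sup>+u. \<integral>\<^sup>+m. ?nb u * ?nb' m * g (u + m) \<partial>count_space UNIV \<partial>count_space UNIV)"
  proof -
    have "(\<integral>\<^sup>+w. (\<Prod>l\<in>S. ?nb (w l)) * g (u + (\<Sum>l\<in>S. w l)) \<partial>count_space (PiE S (\<lambda>_. UNIV)))
        = (\<integral>\<^sup>+m. ?nb' m * g (u + m) \<partial>count_space UNIV)" for u
      using insert.IH[of "\<lambda>s. g (u + s)"] by simp
    then show ?thesis by (simp add: mult.assoc nn_integral_cmult)
  qed
  also have "\<dots> = (\<integral>\<^sup>+s. (\<Sum>u\<le>s. ?nb u * ?nb' (s - u)) * g s \<partial>count_space UNIV)"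
    by (simp add: nn_integral_nat_convolution sum_distrib_right)
  also have "\<dots> = (\<integral>\<^sup>+s. ennreal (nb (real (card (insert j S)) * r) p s) * g s \<partial>count_space UNIV)"
  proof -
    have "(\<Sum>u\<le>s. ?nb u * ?nb' (s - u)) = ennreal (nb (r + real (card S) * r) p s)" for s
      using assms nb_nonneg[OF _ assms(3,4)]
      by (simp add: sum_ennreal ennreal_mult[symmetric] nb_convolution)
    then show ?thesis
      using insert.hyps by (simp add: algebra_simps)
  qed
  finally show ?case .
qed

lemma nn_integral_nb_PiE_marginal:
  fixes W :: "nat \<Rightarrow> nat \<Rightarrow> ennreal"
  assumes "finite S" "i \<in> S" "r \<ge> 0" "0 < p" "p < 1"
  shows "(\<integral>\<^sup>+z. (\<Prod>j\<in>S. ennreal (nb r p (z j))) * W (z i) (\<Sum>j\<in>S. z j) \<partial>count_space (PiE S (\<lambda>_. UNIV)))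
       = (\<integral>\<^sup>+zw. ennreal (nb r p (fst zw)) * ennreal (nb (real (card S - 1) * r) p (snd zw))
            * W (fst zw) (fst zw + snd zw) \<partial>count_space UNIV)"
proof -
  obtain S' where S: "S = insert i S'" "i \<notin> S'" "finite S'"
    using mk_disjoint_insert[OF assms(2)] assms(1) by blast
  have card: "card S - 1 = card S'"
    using S by simp
  let ?nb = "\<lambda>n. ennreal (nb r p n)" and ?nb' = "\<lambda>n. ennreal (nb (real (card S') * r) p n)"
  have upd: "(\<Sum>l\<in>S'. (w(i := u)) l) = (\<Sum>l\<in>S'. w l)" "(\<Prod>l\<in>S'. ?nb ((w(i := u)) l)) = (\<Prod>l\<in>S'. ?nb (w l))"
    for w :: "'a \<Rightarrow> nat" and u
    using S(2) by (auto intro!: sum.cong prod.cong)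
  have inner: "(\<integral>\<^sup>+w. (\<Prod>l\<in>S'. ?nb (w l)) * W u (u + (\<Sum>l\<in>S'. w l)) \<partial>count_space (PiE S' (\<lambda>_. UNIV)))
      = (\<integral>\<^sup>+m. ?nb' m * W u (u + m) \<partial>count_space UNIV)" for u
    using nn_integral_nb_PiE_sum[OF S(3) assms(3-5), of "\<lambda>s. W u (u + s)"] by simp
  have "(\<integral>\<^sup>+z. (\<Prod>j\<in>S. ?nb (z j)) * W (z i) (\<Sum>j\<in>S. z j) \<partial>count_space (PiE S (\<lambda>_. UNIV)))
      = (\<integral>\<^sup>+u. \<integral>\<^sup>+m. ?nb u * ?nb' m * W u (u + m) \<partial>count_space UNIV \<partial>count_space UNIV)"
    unfolding S(1) using S(2,3)
    by (simp add: nn_integral_PiE_insert upd inner mult.assoc nn_integral_cmult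
        fun_upd_same del: fun_upd_apply)
  also have "\<dots> = (\<integral>\<^sup>+zw. ?nb (fst zw) * ?nb' (snd zw) * W (fst zw) (fst zw + snd zw) \<partial>count_space UNIV)"
    by (rule nn_integral_fst_count_space[where
          f = "\<lambda>zw. ?nb (fst zw) * ?nb' (snd zw) * W (fst zw) (fst zw + snd zw)", simplified])
  finally show ?thesis
    unfolding card .
qed

lemma INF_ennreal_add_const_set:
  fixes f :: "'a \<Rightarrow> ennreal"
  assumes "A \<noteq> {}"
  shows "(INF i\<in>A. f i + c) = (INF i\<in>A. f i) + c"
  using continuous_at_Inf_mono[of "\<lambda>x. x + c" "f ` A"]
  using continuous_add[of "at_right (Inf (f ` A))" "\<lambda>x. x" "\<lambda>x. c"] assms
  by (auto simp: mono_def image_comp)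

lemma INF_sum_Pi_ennreal:
  fixes F :: "'i \<Rightarrow> 'b \<Rightarrow> ennreal"
  assumes "finite S" "\<And>i. i \<in> S \<Longrightarrow> B i \<noteq> {}"
  shows "(INF a\<in>Pi S B. \<Sum>i\<in>S. F i (a i)) = (\<Sum>i\<in>S. INF b\<in>B i. F i b)"
  using assms
proof (induction S rule: finite_induct)
  case empty
  show ?case by simp
next
  case (insert j S)
  let ?G = "\<lambda>a. \<Sum>i\<in>S. F i (a i)"
  have "Pi S B \<noteq> {}" "B j \<noteq> {}"
    using insert.prems by (auto simp: Pi_eq_empty)
  have "(INF a\<in>Pi (insert j S) B. F j (a j) + ?G a) \<le> (INF b\<in>B j. INF a\<in>Pi S B. F j b + ?G a)"
  proof (intro INF_greatest)
    fix a b assume "b \<in> B j" "a \<in> Pi S B"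
    then have mem: "a(j := b) \<in> Pi (insert j S) B" by auto
    have "?G (a(j := b)) = ?G a" using insert.hyps by (intro sum.cong) auto
    then show "(INF a\<in>Pi (insert j S) B. F j (a j) + ?G a) \<le> F j b + ?G a"
      using INF_lower[OF mem, of "\<lambda>a. F j (a j) + ?G a"] by (simp add: fun_upd_same del: fun_upd_apply)
  qed
  also have "\<dots> = (INF b\<in>B j. F j b + (INF a\<in>Pi S B. ?G a))"
  proof (rule INF_cong[OF refl])
    fix b
    show "(INF a\<in>Pi S B. F j b + ?G a) = F j b + (INF a\<in>Pi S B. ?G a)"
      using INF_ennreal_add_const_set[OF \<open>Pi S B \<noteq> {}\<close>, of ?G "F j b"] by (simp only: add.commute)
  qed
  also have "\<dots> = (INF b\<in>B j. F j b) + (INF a\<in>Pi S B. ?G a)"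
    by (rule INF_ennreal_add_const_set[OF \<open>B j \<noteq> {}\<close>])
  finally have "(INF a\<in>Pi (insert j S) B. F j (a j) + ?G a) \<le> (INF b\<in>B j. F j b) + (INF a\<in>Pi S B. ?G a)" .
  moreover have "(INF b\<in>B j. F j b) + (INF a\<in>Pi S B. ?G a) \<le> (INF a\<in>Pi (insert j S) B. F j (a j) + ?G a)"
    by (intro INF_greatest add_mono INF_lower) auto
  ultimately show ?case
    using insert by (simp add: antisym)
qed

lemma ptime_bounds:
  assumes "beta0 > 0"
  shows "0 < ptime N beta0 t" "ptime N beta0 t < 1"
  using assms by (auto simp: ptime_def add_pos_nonneg)

lemma Worig_eq_sum_Walt:
  assumes "alpha0 \<ge> 0" "beta0 > 0"
  shows "Worig N T alpha0 beta0 cv ch cb n x k = (\<Sum>i\<in>{1..N}. Walt N T alpha0 beta0 cv ch cb i n (x i) k)"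
proof (induction n arbitrary: x k)
  case 0
  then show ?case by simp
next
  case (Suc n)
  define p where "p = ptime N beta0 (T - Suc n)"
  define r where "r = alpha0 + real k"
  have p: "0 < p" "p < 1"
    using ptime_bounds[OF assms(2)] by (simp_all add: p_def)
  have r: "r \<ge> 0"
    using assms(1) by (simp add: r_def)
  define C where "C i b = Ccost cv ch cb alpha0 p i b (x i) k" for i b
  define H where "H i b = (\<integral>\<^sup>+zw. ennreal (nb r p (fst zw)) * ennreal (nb (real (N - 1) * r) p (snd zw))
      * Walt N T alpha0 beta0 cv ch cb i n (b - int (fst zw)) (k + fst zw + snd zw) \<partial>count_space UNIV)" for i b
  have expectation: "(\<integral>\<^sup>+z. (\<Prod>i\<in>{1..N}. ennreal (nb r p (z i)))
        * Worig N T alpha0 beta0 cv ch cb n (\<lambda>i. a i - int (z i)) (k + (\<Sum>i\<in>{1..N}. z i))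
      \<partial>count_space (PiE {1..N} (\<lambda>_. UNIV))) = (\<Sum>i\<in>{1..N}. H i (a i))" for a
  proof -
    have "H i (a i) = (\<integral>\<^sup>+z. (\<Prod>j\<in>{1..N}. ennreal (nb r p (z j)))
        * Walt N T alpha0 beta0 cv ch cb i n (a i - int (z i)) (k + (\<Sum>j\<in>{1..N}. z j))
      \<partial>count_space (PiE {1..N} (\<lambda>_. UNIV)))" if "i \<in> {1..N}" for i
      using nn_integral_nb_PiE_marginal[OF _ that r p,
          of "\<lambda>u s. Walt N T alpha0 beta0 cv ch cb i n (a i - int u) (k + s)"]
      by (simp add: H_def add.assoc)
    then show ?thesis
      by (simp add: Suc.IH sum_distrib_left nn_integral_sum)
  qed
  have "{a. \<forall>i\<in>{1..N}. x i \<le> a i} = Pi {1..N} (\<lambda>i. {x i..})"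
    by auto
  then have "Worig N T alpha0 beta0 cv ch cb (Suc n) x k
      = (INF a\<in>Pi {1..N} (\<lambda>i. {x i..}). \<Sum>i\<in>{1..N}. C i (a i) + H i (a i))"
    unfolding Worig.simps Let_def p_def[symmetric] r_def[symmetric] expectation
    by (simp add: C_def sum.distrib)
  also have "\<dots> = (\<Sum>i\<in>{1..N}. INF b\<in>{x i..}. C i b + H i b)"
    by (rule INF_sum_Pi_ennreal) auto
  also have "\<dots> = (\<Sum>i\<in>{1..N}. Walt N T alpha0 beta0 cv ch cb i (Suc n) (x i) k)"
    by (simp add: Let_def p_def[symmetric] r_def[symmetric] C_def H_def atLeast_def)
  finally show ?case .
qed

theorem theorem2:
  fixes N T :: nat and alpha0 beta0 :: real and cv ch cb :: "nat \<Rightarrow> real"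
    and t :: nat and x :: "nat \<Rightarrow> int" and k :: nat
  assumes "N \<ge> 1" and "T \<ge> 1" and "alpha0 > 0" and "beta0 > 0"
    and "\<forall>i\<in>{1..N}. cv i > 0 \<and> ch i > 0 \<and> cb i > 0 \<and> cb i > cv i"
    and "t \<le> T"
  shows "Vorig N T alpha0 beta0 cv ch cb t x k
         = (\<Sum>i\<in>{1..N}. Valt N T alpha0 beta0 cv ch cb i t (x i) k)"
  unfolding Vorig_def Valt_def
  using Worig_eq_sum_Walt[OF less_imp_le[OF assms(3)] assms(4)] .

end
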